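(* Let $u(t)=\sum_{i=1}^M s_i(t)e^{j2\pi f_it}$ be a signal in the class $\mathcal{M}_2$ described in the context, and consider an L-shaped array with $2N-1$ sensors ($N$ sensors along each of the $x$ and $z$ axes, with a common sensor at the origin) and distance $d$ between adjacent sensors, with the sampling system described in the context, producing $\mathbf{x}[k]=\mathbf{A}_x(\boldsymbol{f},\boldsymbol{\theta})\mathbf{w}[k]$ and $\mathbf{z}[k]=\mathbf{A}_z(\boldsymbol{f},\boldsymbol{\theta})\mathbf{w}[k]$, $k\in\mathbb{Z}$. If (c1) $d<\frac{c}{f_{\text{Nyq}}}$ and (c2) $N>M$, then this pair of equations has a unique solution $(\boldsymbol{f},\boldsymbol{\theta},\mathbf{w})$ (up to a common relabeling of the transmissions), where $\boldsymbol{f}=(f_1,\dots,f_M)^T$ and $\boldsymbol{\theta}=(\theta_1,\dots,\theta_M)^T$.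
   Context: Class $\mathcal{M}_2$: $u$ is complex valued with Fourier transform supported in $[-f_{\text{Nyq}}/2,f_{\text{Nyq}}/2]$, each $s_i$ has Fourier transform supported in $[-B/2,B/2]$, $\min_{i\neq j}|f_i-f_j|>B$; the $s_i$ are wide-sense stationary, zero mean, mutually uncorrelated, with $\mathbb{E}[|s_i(t)|^2]\neq 0$; transmission $i$ lies in the $xz$-plane with unknown angle of arrival $\theta_i$, $|\theta_i|<90^\circ$, and $f_i\cos\theta_i\neq f_j\cos\theta_j$, $f_i\sin\theta_i\neq f_j\sin\theta_j$ for $i\neq j$. $c>0$ is the propagation speed. Each sensor multiplies its received signal by the same periodic function $p(t)$, applies an ideal low-pass filter and samples at rate $f_s$. With $\tau_n^x(\theta)=\frac{dn}{c}\cos\theta$ and $\tau_n^z(\theta)=\frac{dn}{c}\sin\theta$, $(\mathbf{A}_x)_{n,i}=e^{j2\pi f_i\tau_n^x(\theta_i)}$ and $(\mathbf{A}_z)_{n,i}=e^{j2\pi f_i\tau_n^z(\theta_i)}$ for $n=1,\dots,N$, $i=1,\dots,M$; $\mathbf{w}[k]\in\mathbb{C}^M$ has entries $w_i[k]=\tilde s_i(k/f_s)$, where $\tilde s_i$ is the filtered version of $s_i(t)e^{j2\pi f_it}p(t)$, and $\mathbb{E}[\mathbf{w}\mathbf{w}^H]$ is diagonal with nonzero diagonal entries. *)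

theory Defs
  imports "HOL-Probability.Probability"
begin

text \<open>Transmissions are indexed by
  i < M (0-based), sensors on each axis by n = 1..N.\<close>

definition tau_x :: "real \<Rightarrow> real \<Rightarrow> nat \<Rightarrow> real \<Rightarrow> real" where
  "tau_x d c n \<theta> = d * real n / c * cos \<theta>"

definition tau_z :: "real \<Rightarrow> real \<Rightarrow> nat \<Rightarrow> real \<Rightarrow> real" where
  "tau_z d c n \<theta> = d * real n / c * sin \<theta>"

definition A_x :: "real \<Rightarrow> real \<Rightarrow> (nat \<Rightarrow> real) \<Rightarrow> (nat \<Rightarrow> real) \<Rightarrow> nat \<Rightarrow> nat \<Rightarrow> complex" where
  "A_x d c f \<theta> n i = cis (2 * pi * f i * tau_x d c n (\<theta> i))"

definition A_z :: "real \<Rightarrow> real \<Rightarrow> (nat \<Rightarrow> real) \<Rightarrow> (nat \<Rightarrow> real) \<Rightarrow> nat \<Rightarrow> nat \<Rightarrow> complex" where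
  "A_z d c f \<theta> n i = cis (2 * pi * f i * tau_z d c n (\<theta> i))"

text \<open>Matrix-vector product (A w[k])_n = sum_{i<M} A_{n,i} w_i[k], for each outcome omega.
  w i k omega is the i-th entry of the random vector w[k].\<close>

definition mat_apply :: "nat \<Rightarrow> (nat \<Rightarrow> nat \<Rightarrow> complex) \<Rightarrow> (nat \<Rightarrow> int \<Rightarrow> 'w \<Rightarrow> complex)
    \<Rightarrow> nat \<Rightarrow> int \<Rightarrow> 'w \<Rightarrow> complex" where
  "mat_apply M A w n k \<omega> = (\<Sum>i<M. A n i * w i k \<omega>)"

definition diag_nonzero_cov :: "'w measure \<Rightarrow> nat \<Rightarrow> (nat \<Rightarrow> int \<Rightarrow> 'w \<Rightarrow> complex) \<Rightarrow> bool" where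
  "diag_nonzero_cov P M w \<longleftrightarrow>
     (\<forall>k::int. \<forall>i<M. \<forall>l<M.
        integrable P (\<lambda>\<omega>. w i k \<omega> * cnj (w l k \<omega>)) \<and>
        (i \<noteq> l \<longrightarrow> (\<integral>\<omega>. w i k \<omega> * cnj (w l k \<omega>) \<partial>P) = 0) \<and>
        (i = l \<longrightarrow> (\<integral>\<omega>. w i k \<omega> * cnj (w l k \<omega>) \<partial>P) \<noteq> 0))"

definition admissible :: "'w measure \<Rightarrow> real \<Rightarrow> real \<Rightarrow> nat \<Rightarrow> (nat \<Rightarrow> real) \<Rightarrow> (nat \<Rightarrow> real)
    \<Rightarrow> (nat \<Rightarrow> int \<Rightarrow> 'w \<Rightarrow> complex) \<Rightarrow> bool" where
  "admissible P fNyq B M f \<theta> w \<longleftrightarrow>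
     (\<forall>i<M. \<bar>f i\<bar> \<le> fNyq / 2) \<and>
     (\<forall>i<M. \<bar>\<theta> i\<bar> < pi / 2) \<and>
     (\<forall>i<M. \<forall>j<M. i \<noteq> j \<longrightarrow>
        \<bar>f i - f j\<bar> > B \<and>
        f i * cos (\<theta> i) \<noteq> f j * cos (\<theta> j) \<and>
        f i * sin (\<theta> i) \<noteq> f j * sin (\<theta> j)) \<and>
     diag_nonzero_cov P M w"

end

theory Submission
  imports Defs "HOL-Computational_Algebra.Polynomial"
begin

text \<open>Both steering matrices are Vandermonde matrices in the unimodular nodes
  cis (2 pi d f_i cos theta_i / c) and cis (2 pi d f_i sin theta_i / c); by (c1) their phases lie
  in (-pi, pi), so distinct spatial frequencies give distinct nodes.  Since the sources are
  uncorrelated and the nodes unimodular, the covariance E[x_n x_m^*] depends only on n - m and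
  supplies 2N - 1 >= 2M + 1 power sums of the x-nodes weighted by the source powers.  A Vandermonde
  argument on the union of two candidate node sets forces them to coincide, which yields the
  relabeling.  With the nodes known, the N >= M equations x[k] = A_x w[k] form an injective
  Vandermonde system and determine w[k]; correlating z[k] with the sources then identifies the
  z-nodes, and the pair (f cos theta, f sin theta) with |theta| < pi/2 determines (f, theta).\<close>

lemma power_sums_vanish_imp_coeff_zero:
  fixes a :: "'b \<Rightarrow> 'a::idom"
  assumes fin: "finite A" and inj: "inj_on a A" and card: "card A \<le> K"
    and sums: "\<And>j. j < K \<Longrightarrow> (\<Sum>l\<in>A. c l * a l ^ j) = 0" and i: "i \<in> A"
  shows "c i = 0"
proof -
  define p where "p = (\<Prod>l\<in>A - {i}. [:- a l, 1:])"
  have "degree p = card (A - {i})"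
    unfolding p_def by (subst degree_prod_eq_sum_degree) (auto simp: fin)
  hence deg: "degree p < K"
    using card fin i by (metis card_Diff1_less order.strict_trans2)
  have "(\<Sum>l\<in>A. c l * poly p (a l)) = (\<Sum>j\<le>degree p. coeff p j * (\<Sum>l\<in>A. c l * a l ^ j))"
    by (simp add: poly_altdef sum_distrib_left sum.swap[of _ A] mult_ac)
  also have "\<dots> = 0"
    using sums deg by (intro sum.neutral) auto
  finally have "(\<Sum>l\<in>A. c l * poly p (a l)) = 0" .
  moreover have "poly p (a l) = 0" if "l \<in> A - {i}" for l
    unfolding p_def using fin that by (auto simp: poly_prod prod_zero_iff)
  moreover have "poly p (a i) \<noteq> 0"
    unfolding p_def using fin i inj by (auto simp: poly_prod prod_zero_iff inj_on_eq_iff)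
  ultimately show ?thesis
    using fin i by (simp add: sum.remove)
qed

lemma equal_power_sums_imp_node_mem:
  fixes a a' :: "'b \<Rightarrow> 'a::idom"
  assumes fin: "finite A" and inj': "inj_on a' A" and card: "2 * card A \<le> K"
    and sums: "\<And>j. j < K \<Longrightarrow> (\<Sum>i\<in>A. c i * a i ^ j) = (\<Sum>i\<in>A. c' i * a' i ^ j)"
    and i: "i \<in> A" and nz: "c' i \<noteq> 0"
  shows "a' i \<in> a ` A"
proof -
  define S where "S = a ` A \<union> a' ` A"
  define G where "G b h t = (\<Sum>l\<in>{l\<in>A. b l = t}. h l)" for b h :: "'b \<Rightarrow> 'a" and t
  have finS: "finite S" unfolding S_def using fin by simp
  have regroup: "(\<Sum>l\<in>A. h l * b l ^ j) = (\<Sum>t\<in>S. G b h t * t ^ j)"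
    if "b ` A \<subseteq> S" for b h j
  proof -
    have "(\<Sum>t\<in>S. G b h t * t ^ j) = (\<Sum>t\<in>S. \<Sum>l\<in>{l\<in>A. b l = t}. h l * b l ^ j)"
      unfolding G_def by (auto simp: sum_distrib_right intro!: sum.cong)
    also have "\<dots> = (\<Sum>l\<in>A. h l * b l ^ j)"
      using fin finS that by (rule sum.group)
    finally show ?thesis ..
  qed
  have "G a c t - G a' c' t = 0" if "t \<in> S" for t
  proof (rule power_sums_vanish_imp_coeff_zero[of S id, OF finS _ _ _ that])
    show "card S \<le> K"
      using card card_Un_le[of "a ` A" "a' ` A"] card_image_le[OF fin, of a]
        card_image_le[OF fin, of a'] by (simp add: S_def)
    show "(\<Sum>t\<in>S. (G a c t - G a' c' t) * id t ^ j) = 0" if "j < K" for j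
      using sums[OF that] regroup[of a c j] regroup[of a' c' j]
      by (simp add: S_def left_diff_distrib sum_subtractf)
  qed simp
  moreover have "{l\<in>A. a' l = a' i} = {i}"
    using inj' i by (auto simp: inj_on_eq_iff)
  hence "G a' c' (a' i) = c' i"
    by (simp add: G_def)
  ultimately have "G a c (a' i) \<noteq> 0"
    using nz i by (auto simp: S_def)
  then obtain l where "l \<in> A" "a l = a' i"
    unfolding G_def by (metis (mono_tags, lifting) empty_Collect_eq sum.empty)
  thus ?thesis by force
qed

lemma unimodular_pow_cnj_pow_shift:
  fixes \<alpha> :: complex
  assumes u: "\<alpha> * cnj \<alpha> = 1" and "p + m = q + n"
  shows "\<alpha> ^ p * cnj \<alpha> ^ q = \<alpha> ^ n * cnj \<alpha> ^ m"
proof -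
  have "\<alpha> ^ p * cnj \<alpha> ^ q = \<alpha> ^ (p + n) * cnj \<alpha> ^ (q + n)"
    using u by (simp add: power_add power_mult_distrib[symmetric] mult_ac)
  also have "\<dots> = \<alpha> ^ (n + p) * cnj \<alpha> ^ (m + p)"
    using assms(2) by (simp add: add.commute)
  also have "\<dots> = \<alpha> ^ n * cnj \<alpha> ^ m"
    using u by (simp add: power_add power_mult_distrib[symmetric] mult_ac)
  finally show ?thesis .
qed

text \<open>For unimodular nodes the covariances indexed by n, m \<in> {1..N} only depend on n - m;
  multiplied by cnj \<alpha> ^ (N - 1) they become the 2N - 1 power sums with exponents 0 .. 2N - 2.\<close>

lemma unimodular_covariances_imp_node_mem:
  fixes a a' D D' :: "nat \<Rightarrow> complex"
  assumes inj': "inj_on a' {..<M}"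
    and u: "\<And>i. a i * cnj (a i) = 1" and u': "\<And>i. a' i * cnj (a' i) = 1"
    and MN: "M < N" and nz: "D' i \<noteq> 0" and i: "i < M"
    and cov: "\<And>n m. n \<in> {1..N} \<Longrightarrow> m \<in> {1..N} \<Longrightarrow>
      (\<Sum>l<M. D l * a l ^ n * cnj (a l) ^ m) = (\<Sum>l<M. D' l * a' l ^ n * cnj (a' l) ^ m)"
  shows "a' i \<in> a ` {..<M}"
proof (rule equal_power_sums_imp_node_mem[OF _ inj', where K = "2 * N - 1"])
  fix j assume j: "j < 2 * N - 1"
  define n where "n = (if j < N then 1 else j + 2 - N)"
  define m where "m = (if j < N then N - j else 1)"
  have nm: "n \<in> {1..N}" "m \<in> {1..N}"
    using j by (auto simp: n_def m_def)
  have shift: "\<alpha> ^ j * cnj \<alpha> ^ (N - 1) = \<alpha> ^ n * cnj \<alpha> ^ m" if "\<alpha> * cnj \<alpha> = 1" for \<alpha>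
    by (rule unimodular_pow_cnj_pow_shift[OF that]) (use j MN in \<open>auto simp: n_def m_def\<close>)
  show "(\<Sum>l<M. D l * cnj (a l) ^ (N - 1) * a l ^ j) =
        (\<Sum>l<M. D' l * cnj (a' l) ^ (N - 1) * a' l ^ j)"
    using cov[OF nm] shift[OF u] shift[OF u'] by (simp add: mult_ac)
next
  show "D' i * cnj (a' i) ^ (N - 1) \<noteq> 0"
    using nz u'[of i] by auto
qed (use MN i in auto)

lemma permutes_of_matching_nodes:
  assumes fin: "finite A" and inj': "inj_on a' A" and match: "\<And>i. i \<in> A \<Longrightarrow> a' i \<in> a ` A"
  shows "\<exists>\<sigma>. \<sigma> permutes A \<and> (\<forall>i\<in>A. a' i = a (\<sigma> i))"
proof -
  define \<sigma> where "\<sigma> i = (if i \<in> A then SOME j. j \<in> A \<and> a j = a' i else i)" for i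
  have \<sigma>: "\<sigma> i \<in> A \<and> a (\<sigma> i) = a' i" if "i \<in> A" for i
    using someI_ex[of "\<lambda>j. j \<in> A \<and> a j = a' i"] match[OF that] that
    by (force simp: \<sigma>_def)
  have "inj_on \<sigma> A"
    by (rule inj_onI) (metis \<sigma> inj' inj_onD)
  moreover have "\<sigma> ` A = A"
    using \<sigma> by (intro endo_inj_surj[OF fin _ \<open>inj_on \<sigma> A\<close>]) auto
  ultimately have "\<sigma> permutes A"
    by (intro bij_imp_permutes) (auto simp: bij_betw_def \<sigma>_def)
  thus ?thesis
    using \<sigma> by auto
qed

lemma vandermonde_system_unique:
  fixes a :: "'b \<Rightarrow> 'a::idom"
  assumes fin: "finite A" and inj: "inj_on a A" and nz: "\<And>i. i \<in> A \<Longrightarrow> a i \<noteq> 0"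
    and card: "card A \<le> N"
    and eq: "\<And>n. n \<in> {1..N} \<Longrightarrow> (\<Sum>i\<in>A. a i ^ n * v i) = (\<Sum>i\<in>A. a i ^ n * v' i)"
    and i: "i \<in> A"
  shows "v i = v' i"
proof -
  have "(v i - v' i) * a i = 0"
  proof (rule power_sums_vanish_imp_coeff_zero[OF fin inj card _ i])
    fix j assume "j < N"
    hence "(\<Sum>l\<in>A. a l ^ Suc j * v l) = (\<Sum>l\<in>A. a l ^ Suc j * v' l)"
      by (intro eq) auto
    thus "(\<Sum>l\<in>A. (v l - v' l) * a l * a l ^ j) = 0"
      by (simp add: algebra_simps sum_subtractf)
  qed
  thus ?thesis
    using nz[OF i] by simp
qed

lemma permuted_vandermonde_system_unique:
  fixes a :: "nat \<Rightarrow> 'a::idom"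
  assumes inj: "inj_on a {..<M}" and nz: "\<And>i. i < M \<Longrightarrow> a i \<noteq> 0" and \<sigma>: "\<sigma> permutes {..<M}"
    and "M \<le> N"
    and eq: "\<And>n. n \<in> {1..N} \<Longrightarrow> (\<Sum>i<M. a i ^ n * v i) = (\<Sum>i<M. a (\<sigma> i) ^ n * v' i)"
    and i: "i < M"
  shows "v' i = v (\<sigma> i)"
proof -
  have "v (\<sigma> i) = v' (inv \<sigma> (\<sigma> i))"
  proof (rule vandermonde_system_unique[OF finite_lessThan inj, where v' = "\<lambda>j. v' (inv \<sigma> j)"])
    show "(\<Sum>j<M. a j ^ n * v j) = (\<Sum>j<M. a j ^ n * v' (inv \<sigma> j))" if "n \<in> {1..N}" for n
      using eq[OF that] sum.permute[OF \<sigma>, of "\<lambda>j. a j ^ n * v' (inv \<sigma> j)"]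
      by (simp add: comp_def permutes_inverses(2)[OF \<sigma>])
    show "\<sigma> i \<in> {..<M}"
      using permutes_in_image[OF \<sigma>] i by simp
  qed (use nz \<open>M \<le> N\<close> in auto)
  thus ?thesis
    by (simp add: permutes_inverses(2)[OF \<sigma>])
qed

lemma integrable_combination_mult_cnj:
  assumes cov: "diag_nonzero_cov P M w" and l: "l < M"
  shows "integrable P (\<lambda>\<omega>. (\<Sum>i<M. b i * w i k \<omega>) * cnj (w l k \<omega>))"
  using cov l unfolding diag_nonzero_cov_def sum_distrib_right
  by (auto simp: mult.assoc intro!: integrable_sum integrable_mult_right)

lemma integral_combination_mult_cnj:
  assumes cov: "diag_nonzero_cov P M w" and l: "l < M"
  shows "(\<integral>\<omega>. (\<Sum>i<M. b i * w i k \<omega>) * cnj (w l k \<omega>) \<partial>P)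
       = b l * (\<integral>\<omega>. w l k \<omega> * cnj (w l k \<omega>) \<partial>P)"
proof -
  have int: "integrable P (\<lambda>\<omega>. w i k \<omega> * cnj (w l k \<omega>))" if "i < M" for i
    using cov l that unfolding diag_nonzero_cov_def by blast
  have "(\<integral>\<omega>. (\<Sum>i<M. b i * w i k \<omega>) * cnj (w l k \<omega>) \<partial>P)
      = (\<Sum>i<M. b i * (\<integral>\<omega>. w i k \<omega> * cnj (w l k \<omega>) \<partial>P))"
    unfolding sum_distrib_right mult.assoc
    by (subst Bochner_Integration.integral_sum) (auto intro: int integrable_mult_right)
  also have "\<dots> = (\<Sum>i\<in>{l}. b i * (\<integral>\<omega>. w i k \<omega> * cnj (w l k \<omega>) \<partial>P))"
    using cov l unfolding diag_nonzero_cov_def by (intro sum.mono_neutral_right) auto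
  finally show ?thesis by simp
qed

lemma integral_combination_mult_cnj_combination:
  assumes cov: "diag_nonzero_cov P M w"
  shows "(\<integral>\<omega>. (\<Sum>i<M. a i * w i k \<omega>) * cnj (\<Sum>l<M. b l * w l k \<omega>) \<partial>P)
       = (\<Sum>i<M. a i * cnj (b i) * (\<integral>\<omega>. w i k \<omega> * cnj (w i k \<omega>) \<partial>P))"
proof -
  have "(\<integral>\<omega>. (\<Sum>i<M. a i * w i k \<omega>) * cnj (\<Sum>l<M. b l * w l k \<omega>) \<partial>P)
      = (\<Sum>l<M. cnj (b l) * (\<integral>\<omega>. (\<Sum>i<M. a i * w i k \<omega>) * cnj (w l k \<omega>) \<partial>P))"
    unfolding cnj_sum complex_cnj_mult sum_distrib_left mult.left_commute[of _ "cnj (b _)"]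
    by (subst Bochner_Integration.integral_sum)
       (auto intro!: integrable_mult_right integrable_combination_mult_cnj[OF cov])
  also have "\<dots> = (\<Sum>i<M. a i * cnj (b i) * (\<integral>\<omega>. w i k \<omega> * cnj (w i k \<omega>) \<partial>P))"
    by (rule sum.cong[OF refl]) (simp add: integral_combination_mult_cnj[OF cov])
  finally show ?thesis .
qed

lemma combination_coeffs_unique:
  assumes cov: "diag_nonzero_cov P M w"
    and eq: "\<And>\<omega>. (\<Sum>i<M. a i * w i k \<omega>) = (\<Sum>i<M. b i * w i k \<omega>)" and i: "i < M"
  shows "a i = b i"
proof -
  have "a i * (\<integral>\<omega>. w i k \<omega> * cnj (w i k \<omega>) \<partial>P)
      = (\<integral>\<omega>. (\<Sum>l<M. a l * w l k \<omega>) * cnj (w i k \<omega>) \<partial>P)"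
    by (rule integral_combination_mult_cnj[OF cov i, symmetric])
  also have "\<dots> = (\<integral>\<omega>. (\<Sum>l<M. b l * w l k \<omega>) * cnj (w i k \<omega>) \<partial>P)"
    by (simp only: eq)
  also have "\<dots> = b i * (\<integral>\<omega>. w i k \<omega> * cnj (w i k \<omega>) \<partial>P)"
    by (rule integral_combination_mult_cnj[OF cov i])
  finally have "a i * (\<integral>\<omega>. w i k \<omega> * cnj (w i k \<omega>) \<partial>P)
      = b i * (\<integral>\<omega>. w i k \<omega> * cnj (w i k \<omega>) \<partial>P)" .
  moreover have "(\<integral>\<omega>. w i k \<omega> * cnj (w i k \<omega>) \<partial>P) \<noteq> 0"
    using cov i unfolding diag_nonzero_cov_def by blast
  ultimately show ?thesis by simp
qed

lemma unimodular_vandermonde_mixture_identifiable: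
  fixes a a' :: "nat \<Rightarrow> complex"
  assumes cov: "diag_nonzero_cov P M w" and cov': "diag_nonzero_cov P M w'"
    and inj: "inj_on a {..<M}" and inj': "inj_on a' {..<M}"
    and u: "\<And>i. a i * cnj (a i) = 1" and u': "\<And>i. a' i * cnj (a' i) = 1"
    and MN: "M < N"
    and eq: "\<And>n k \<omega>. n \<in> {1..N} \<Longrightarrow>
      (\<Sum>i<M. a i ^ n * w i k \<omega>) = (\<Sum>i<M. a' i ^ n * w' i k \<omega>)"
  shows "\<exists>\<sigma>. \<sigma> permutes {..<M} \<and> (\<forall>i<M. a' i = a (\<sigma> i) \<and> (\<forall>k \<omega>. w' i k \<omega> = w (\<sigma> i) k \<omega>))"
proof -
  define D where "D v i = (\<integral>\<omega>. v i 0 \<omega> * cnj (v i 0 \<omega>) \<partial>P)" for v :: "nat \<Rightarrow> int \<Rightarrow> _" and i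
  have covariances: "(\<Sum>l<M. D w l * a l ^ n * cnj (a l) ^ m) = (\<Sum>l<M. D w' l * a' l ^ n * cnj (a' l) ^ m)"
    if n: "n \<in> {1..N}" and m: "m \<in> {1..N}" for n m
  proof -
    have "(\<Sum>l<M. D w l * a l ^ n * cnj (a l) ^ m)
        = (\<integral>\<omega>. (\<Sum>i<M. a i ^ n * w i 0 \<omega>) * cnj (\<Sum>i<M. a i ^ m * w i 0 \<omega>) \<partial>P)"
      unfolding integral_combination_mult_cnj_combination[OF cov] D_def
      by (simp add: mult_ac)
    also have "\<dots> = (\<integral>\<omega>. (\<Sum>i<M. a' i ^ n * w' i 0 \<omega>) * cnj (\<Sum>i<M. a' i ^ m * w' i 0 \<omega>) \<partial>P)"
      by (simp only: eq[OF n] eq[OF m])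
    also have "\<dots> = (\<Sum>l<M. D w' l * a' l ^ n * cnj (a' l) ^ m)"
      unfolding integral_combination_mult_cnj_combination[OF cov'] D_def
      by (simp add: mult_ac)
    finally show ?thesis .
  qed
  have nz': "D w' i \<noteq> 0" if "i < M" for i
    using cov' that unfolding diag_nonzero_cov_def D_def by blast
  have match: "a' i \<in> a ` {..<M}" if "i \<in> {..<M}" for i
    using unimodular_covariances_imp_node_mem[OF inj' u u' MN nz' _ covariances] that by simp
  obtain \<sigma> where \<sigma>: "\<sigma> permutes {..<M}" and a': "\<forall>i<M. a' i = a (\<sigma> i)"
    using permutes_of_matching_nodes[OF finite_lessThan inj' match] by auto
  have "w' i k \<omega> = w (\<sigma> i) k \<omega>" if "i < M" for i k \<omega>
  proof (rule permuted_vandermonde_system_unique[OF inj _ \<sigma> _ _ that])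
    show "a i \<noteq> 0" for i
      using u[of i] by auto
    show "(\<Sum>i<M. a i ^ n * w i k \<omega>) = (\<Sum>i<M. a (\<sigma> i) ^ n * w' i k \<omega>)" if "n \<in> {1..N}" for n
      using eq[OF that] a' by simp
  qed (use MN in simp)
  with \<sigma> a' show ?thesis by auto
qed

lemma permuted_combination_coeffs_unique:
  assumes cov: "diag_nonzero_cov P M w" and \<sigma>: "\<sigma> permutes {..<M}"
    and eq: "\<And>\<omega>. (\<Sum>i<M. b i * w i k \<omega>) = (\<Sum>i<M. b' i * w (\<sigma> i) k \<omega>)" and i: "i < M"
  shows "b' i = b (\<sigma> i)"
proof -
  have reindex: "(\<Sum>j<M. b' (inv \<sigma> j) * w j k \<omega>) = (\<Sum>i<M. b' i * w (\<sigma> i) k \<omega>)" for \<omega>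
    using sum.permute[OF \<sigma>, of "\<lambda>j. b' (inv \<sigma> j) * w j k \<omega>"]
    by (simp add: comp_def permutes_inverses(2)[OF \<sigma>])
  have "b (\<sigma> i) = b' (inv \<sigma> (\<sigma> i))"
  proof (rule combination_coeffs_unique[OF cov, where k = k and a = b and b = "\<lambda>j. b' (inv \<sigma> j)"])
    show "(\<Sum>j<M. b j * w j k \<omega>) = (\<Sum>j<M. b' (inv \<sigma> j) * w j k \<omega>)" for \<omega>
      by (simp only: eq reindex)
    show "\<sigma> i < M"
      using permutes_in_image[OF \<sigma>, of i] i by simp
  qed
  thus ?thesis
    by (simp add: permutes_inverses(2)[OF \<sigma>])
qed

definition steering_node :: "real \<Rightarrow> real \<Rightarrow> real \<Rightarrow> complex" where
  "steering_node d c p = cis (2 * pi * p * d / c)"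

lemma steering_node_unimodular: "steering_node d c p * cnj (steering_node d c p) = 1"
  by (simp add: steering_node_def cis_cnj cis_mult)

lemma mat_apply_A_x:
  assumes "c \<noteq> 0"
  shows "mat_apply M (A_x d c f \<theta>) w n k \<omega> = (\<Sum>i<M. steering_node d c (f i * cos (\<theta> i)) ^ n * w i k \<omega>)"
  using assms unfolding mat_apply_def A_x_def tau_x_def steering_node_def Complex.DeMoivre
  by (simp add: field_simps)

lemma mat_apply_A_z:
  assumes "c \<noteq> 0"
  shows "mat_apply M (A_z d c f \<theta>) w n k \<omega> = (\<Sum>i<M. steering_node d c (f i * sin (\<theta> i)) ^ n * w i k \<omega>)"
  using assms unfolding mat_apply_def A_z_def tau_z_def steering_node_def Complex.DeMoivre
  by (simp add: field_simps)

text \<open>Condition (c1) keeps the phase 2 pi p d / c of every in-band spatial frequency p inside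
  (-pi, pi), where cis is injective.\<close>

lemma steering_node_eq_imp_eq:
  assumes "0 < c" "0 < d" "0 < fNyq" and c1: "d < c / fNyq"
    and p: "\<bar>p\<bar> \<le> fNyq / 2" and q: "\<bar>q\<bar> \<le> fNyq / 2"
    and eq: "steering_node d c p = steering_node d c q"
  shows "p = q"
proof -
  have "fNyq * d < c"
    using c1 assms(3) by (simp add: field_simps)
  have phase_bound: "\<bar>2 * pi * r * d / c\<bar> < pi" if "\<bar>r\<bar> \<le> fNyq / 2" for r
  proof -
    have "2 * \<bar>r\<bar> * d \<le> fNyq * d"
      using that assms(2) by (intro mult_right_mono) auto
    hence "2 * \<bar>r\<bar> * d < c"
      using \<open>fNyq * d < c\<close> by linarith
    hence "pi * (2 * \<bar>r\<bar> * d / c) < pi * 1"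
      using assms(1) by (intro mult_strict_left_mono) auto
    thus ?thesis
      using assms(1,2) by (simp add: abs_mult mult_ac)
  qed
  have Arg_node: "Arg (steering_node d c r) = 2 * pi * r * d / c" if "\<bar>r\<bar> \<le> fNyq / 2" for r
  proof -
    have "2 * pi * r * d / c \<in> {-pi<..pi}"
      using phase_bound[OF that] unfolding abs_less_iff by auto
    thus ?thesis
      unfolding steering_node_def by (rule Arg_cis)
  qed
  have "2 * pi * p * d / c = 2 * pi * q * d / c"
    using Arg_node[OF p] Arg_node[OF q] eq by metis
  thus ?thesis
    using assms(1,2) by simp
qed

lemma admissible_spatial_freq_bounds:
  assumes "admissible P fNyq B M f \<theta> w" and "i < M"
  shows "\<bar>f i * cos (\<theta> i)\<bar> \<le> fNyq / 2" "\<bar>f i * sin (\<theta> i)\<bar> \<le> fNyq / 2"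
proof -
  have "\<bar>f i\<bar> \<le> fNyq / 2"
    using assms unfolding admissible_def by blast
  thus "\<bar>f i * cos (\<theta> i)\<bar> \<le> fNyq / 2" "\<bar>f i * sin (\<theta> i)\<bar> \<le> fNyq / 2"
    using mult_left_le[OF abs_cos_le_one abs_ge_zero, of "f i" "\<theta> i"]
      mult_left_le[OF abs_sin_le_one abs_ge_zero, of "f i" "\<theta> i"] by (simp_all add: abs_mult)
qed

lemma admissible_steering_nodes_inj:
  assumes adm: "admissible P fNyq B M f \<theta> w"
    and "0 < c" "0 < d" "0 < fNyq" "d < c / fNyq"
  shows "inj_on (\<lambda>i. steering_node d c (f i * cos (\<theta> i))) {..<M}"
proof (rule inj_onI)
  fix i j assume "i \<in> {..<M}" "j \<in> {..<M}"
    and "steering_node d c (f i * cos (\<theta> i)) = steering_node d c (f j * cos (\<theta> j))"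
  hence "f i * cos (\<theta> i) = f j * cos (\<theta> j)"
    using steering_node_eq_imp_eq[OF assms(2-5)] admissible_spatial_freq_bounds[OF adm] by simp
  thus "i = j"
    using adm \<open>i \<in> {..<M}\<close> \<open>j \<in> {..<M}\<close> unfolding admissible_def by blast
qed

lemma mult_cos_sin_eq_imp_eq:
  fixes f g a b :: real
  assumes "f \<noteq> 0" "\<bar>a\<bar> < pi / 2" "\<bar>b\<bar> < pi / 2"
    and cos: "f * cos a = g * cos b" and sin: "f * sin a = g * sin b"
  shows "f = g \<and> a = b"
proof -
  have "cos a > 0" "cos b > 0"
    using assms(2,3) by (auto intro: cos_gt_zero_pi)
  hence "g \<noteq> 0"
    using assms(1) cos by auto
  have "tan a = (f * sin a) / (f * cos a)"
    using assms(1) by (simp add: tan_def)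
  also have "\<dots> = tan b"
    using \<open>g \<noteq> 0\<close> by (simp add: cos sin tan_def)
  finally have "arctan (tan a) = arctan (tan b)"
    by simp
  hence "a = b"
    using assms(2,3) unfolding abs_less_iff by (simp add: arctan_tan)
  thus ?thesis
    using cos \<open>cos a > 0\<close> by simp
qed

lemma admissible_params_eq_of_steering_nodes_eq:
  assumes adm: "admissible P fNyq B M f \<theta> w" and adm': "admissible P fNyq B M f' \<theta>' w'"
    and "0 < c" "0 < d" "0 < fNyq" "d < c / fNyq"
    and i: "i < M" and j: "j < M" and "f j \<noteq> 0"
    and cos: "steering_node d c (f' i * cos (\<theta>' i)) = steering_node d c (f j * cos (\<theta> j))"
    and sin: "steering_node d c (f' i * sin (\<theta>' i)) = steering_node d c (f j * sin (\<theta> j))"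
  shows "f' i = f j \<and> \<theta>' i = \<theta> j"
proof -
  note node_eq = steering_node_eq_imp_eq[OF assms(3-6)]
  have "f j * cos (\<theta> j) = f' i * cos (\<theta>' i)" "f j * sin (\<theta> j) = f' i * sin (\<theta>' i)"
    using node_eq[OF _ _ cos] node_eq[OF _ _ sin] admissible_spatial_freq_bounds[OF adm j]
      admissible_spatial_freq_bounds[OF adm' i] by simp_all
  moreover have "\<bar>\<theta> j\<bar> < pi / 2" "\<bar>\<theta>' i\<bar> < pi / 2"
    using adm adm' i j unfolding admissible_def by blast+
  ultimately have "f j = f' i \<and> \<theta> j = \<theta>' i"
    by (intro mult_cos_sin_eq_imp_eq[OF \<open>f j \<noteq> 0\<close>])
  thus ?thesis
    by simp
qed

lemma A_x_mixture_identifiable: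
  assumes adm: "admissible P fNyq B M f \<theta> w" and adm': "admissible P fNyq B M f' \<theta>' w'"
    and freq: "0 < c" "0 < d" "0 < fNyq" "d < c / fNyq" and MN: "M < N"
    and eq: "\<And>n k \<omega>. n \<in> {1..N} \<Longrightarrow>
      mat_apply M (A_x d c f \<theta>) w n k \<omega> = mat_apply M (A_x d c f' \<theta>') w' n k \<omega>"
  shows "\<exists>\<sigma>. \<sigma> permutes {..<M} \<and>
    (\<forall>i<M. steering_node d c (f' i * cos (\<theta>' i)) = steering_node d c (f (\<sigma> i) * cos (\<theta> (\<sigma> i)))
       \<and> (\<forall>k \<omega>. w' i k \<omega> = w (\<sigma> i) k \<omega>))"
proof (rule unimodular_vandermonde_mixture_identifiable[OF _ _
      admissible_steering_nodes_inj[OF adm freq] admissible_steering_nodes_inj[OF adm' freq]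
      steering_node_unimodular steering_node_unimodular MN])
  show "diag_nonzero_cov P M w" "diag_nonzero_cov P M w'"
    using adm adm' unfolding admissible_def by blast+
  show "(\<Sum>i<M. steering_node d c (f i * cos (\<theta> i)) ^ n * w i k \<omega>)
      = (\<Sum>i<M. steering_node d c (f' i * cos (\<theta>' i)) ^ n * w' i k \<omega>)" if "n \<in> {1..N}" for n k \<omega>
    using eq[OF that, of k \<omega>] freq(1) by (simp add: mat_apply_A_x)
qed

lemma A_z_nodes_permuted:
  assumes cov: "diag_nonzero_cov P M w" and \<sigma>: "\<sigma> permutes {..<M}" and "c \<noteq> 0"
    and w': "\<And>i k \<omega>. i < M \<Longrightarrow> w' i k \<omega> = w (\<sigma> i) k \<omega>"
    and eq: "\<And>\<omega>. mat_apply M (A_z d c f \<theta>) w 1 k \<omega> = mat_apply M (A_z d c f' \<theta>') w' 1 k \<omega>"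
    and i: "i < M"
  shows "steering_node d c (f' i * sin (\<theta>' i)) = steering_node d c (f (\<sigma> i) * sin (\<theta> (\<sigma> i)))"
proof (rule permuted_combination_coeffs_unique[OF cov \<sigma> _ i])
  fix \<omega>
  have "(\<Sum>i<M. steering_node d c (f i * sin (\<theta> i)) * w i k \<omega>)
      = (\<Sum>i<M. steering_node d c (f' i * sin (\<theta>' i)) * w' i k \<omega>)"
    using eq[of \<omega>] \<open>c \<noteq> 0\<close> by (simp add: mat_apply_A_z)
  also have "\<dots> = (\<Sum>i<M. steering_node d c (f' i * sin (\<theta>' i)) * w (\<sigma> i) k \<omega>)"
    by (intro sum.cong) (simp_all add: w')
  finally show "(\<Sum>i<M. steering_node d c (f i * sin (\<theta> i)) * w i k \<omega>)
      = (\<Sum>i<M. steering_node d c (f' i * sin (\<theta>' i)) * w (\<sigma> i) k \<omega>)" .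
qed

theorem theorem4:
  fixes P :: "'w measure" and c d fNyq B :: real and N M :: nat
    and f \<theta> :: "nat \<Rightarrow> real" and w :: "nat \<Rightarrow> int \<Rightarrow> 'w \<Rightarrow> complex"
    and x z :: "nat \<Rightarrow> int \<Rightarrow> 'w \<Rightarrow> complex"
  assumes "prob_space P"
    and "c > 0" and "d > 0" and "fNyq > 0" and "B > 0"
    and adm: "admissible P fNyq B M f \<theta> w"
    and fnz: "\<forall>i<M. f i \<noteq> 0"
    and x_def: "\<forall>n\<in>{1..N}. \<forall>k. \<forall>\<omega>. x n k \<omega> = mat_apply M (A_x d c f \<theta>) w n k \<omega>"
    and z_def: "\<forall>n\<in>{1..N}. \<forall>k. \<forall>\<omega>. z n k \<omega> = mat_apply M (A_z d c f \<theta>) w n k \<omega>"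
    and c1: "d < c / fNyq"
    and c2: "N > M"
  shows "\<forall>f' \<theta>' w'. admissible P fNyq B M f' \<theta>' w' \<and>
            (\<forall>n\<in>{1..N}. \<forall>k. \<forall>\<omega>. x n k \<omega> = mat_apply M (A_x d c f' \<theta>') w' n k \<omega>) \<and>
            (\<forall>n\<in>{1..N}. \<forall>k. \<forall>\<omega>. z n k \<omega> = mat_apply M (A_z d c f' \<theta>') w' n k \<omega>)
          \<longrightarrow> (\<exists>\<sigma>. \<sigma> permutes {..<M} \<and>
                 (\<forall>i<M. f' i = f (\<sigma> i) \<and> \<theta>' i = \<theta> (\<sigma> i) \<and>
                         (\<forall>k \<omega>. w' i k \<omega> = w (\<sigma> i) k \<omega>)))"
proof (intro allI impI, elim conjE)
  fix f' \<theta>' w'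
  assume adm': "admissible P fNyq B M f' \<theta>' w'"
    and x': "\<forall>n\<in>{1..N}. \<forall>k. \<forall>\<omega>. x n k \<omega> = mat_apply M (A_x d c f' \<theta>') w' n k \<omega>"
    and z': "\<forall>n\<in>{1..N}. \<forall>k. \<forall>\<omega>. z n k \<omega> = mat_apply M (A_z d c f' \<theta>') w' n k \<omega>"
  note freq = \<open>0 < c\<close> \<open>0 < d\<close> \<open>0 < fNyq\<close> c1
  have cov: "diag_nonzero_cov P M w"
    using adm unfolding admissible_def by blast
  have x_eq: "mat_apply M (A_x d c f \<theta>) w n k \<omega> = mat_apply M (A_x d c f' \<theta>') w' n k \<omega>"
    if "n \<in> {1..N}" for n k \<omega>
    using x_def[rule_format, OF that, of k \<omega>] x'[rule_format, OF that, of k \<omega>] by simp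
  have "1 \<in> {1..N}"
    using c2 by simp
  hence z_eq: "mat_apply M (A_z d c f \<theta>) w 1 0 \<omega> = mat_apply M (A_z d c f' \<theta>') w' 1 0 \<omega>" for \<omega>
    using z_def[rule_format, of 1 0 \<omega>] z'[rule_format, of 1 0 \<omega>] by simp
  obtain \<sigma> where \<sigma>: "\<sigma> permutes {..<M}"
    and x_nodes: "\<forall>i<M. steering_node d c (f' i * cos (\<theta>' i)) = steering_node d c (f (\<sigma> i) * cos (\<theta> (\<sigma> i)))
                   \<and> (\<forall>k \<omega>. w' i k \<omega> = w (\<sigma> i) k \<omega>)"
    using A_x_mixture_identifiable[OF adm adm' freq c2 x_eq] by blast
  have "f' i = f (\<sigma> i) \<and> \<theta>' i = \<theta> (\<sigma> i)" if "i < M" for i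
  proof (rule admissible_params_eq_of_steering_nodes_eq[OF adm adm' freq that])
    show "\<sigma> i < M" "f (\<sigma> i) \<noteq> 0"
      using permutes_in_image[OF \<sigma>] fnz that by auto
    show "steering_node d c (f' i * cos (\<theta>' i)) = steering_node d c (f (\<sigma> i) * cos (\<theta> (\<sigma> i)))"
      using x_nodes that by blast
    show "steering_node d c (f' i * sin (\<theta>' i)) = steering_node d c (f (\<sigma> i) * sin (\<theta> (\<sigma> i)))"
      by (rule A_z_nodes_permuted[OF cov \<sigma> _ _ z_eq that]) (use x_nodes \<open>0 < c\<close> in auto)
  qed
  with \<sigma> x_nodes show "\<exists>\<sigma>. \<sigma> permutes {..<M} \<and>
          (\<forall>i<M. f' i = f (\<sigma> i) \<and> \<theta>' i = \<theta> (\<sigma> i) \<and> (\<forall>k \<omega>. w' i k \<omega> = w (\<sigma> i) k \<omega>))"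
    by blast
qed

end
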